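(* Let $n\ge1$, $N=\{1,\dots,n\}$, $A=(a_{ij})\in[0,1]^{n\times n}$, $b=(b_1,\dots,b_n)$ with $b_i>0$, assume $\check\alpha_j\le1$ for all $j\in N$, and let $\lambda\in[0,+\infty)$. If for every $p=(p_1,\dots,p_n)\in P$ the system $$\begin{cases} x_j=d_{0j}=1 & \text{for all } j\in N^*,\\ d_{(p_j-1)j}\le x_j\le d_{p_jj} & \text{for all } j\in N\setminus N^*,\\ \sum_{j\in N^*}a_{ij}+\sum_{j\in N\setminus N^*}\big[\gamma_{ij}\,x_j+(1-\gamma_{ij})\,a_{ij}\big]\ge b_i & \text{for all } i\in N,\\ \sum_{j\in N^*}a_{ij}+\sum_{j\in N\setminus N^*}\big[\gamma_{ij}\,x_j+(1-\gamma_{ij})\,a_{ij}\big]=\lambda x_i & \text{for all } i\in N\end{cases}$$ has no solution $x\in[0,1]^n$, then $V^*(A,\lambda)=\emptyset$.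
   Context: $\theta=(0,\dots,0)$. For $x\in[0,1]^n$, $(A\odot x^T)_i=\sum_{j\in N}\min\{a_{ij},x_j\}$. $V^*(A,\lambda)=\{x\in[0,1]^n: (A\odot x^T)_i\ge b_i \text{ and } (A\odot x^T)_i=\lambda x_i \text{ for all } i\in N,\ x\neq\theta\}$. $\check\alpha_j=\max\big(\{0\}\cup\{b_i-\sum_{k\in N\setminus\{j\}}a_{ik}: i\in N\}\big)$. $D_j=\{d_{0j}<\dots<d_{l_jj}\}$ is the set $\{\check\alpha_j\}\cup\{a_{ij}: i\in N,\ a_{ij}\ge\check\alpha_j\}\cup\{1\}$ listed increasingly. $N^*=\{j\in N:\check\alpha_j=1\}$; $P_j=\{0\}$ for $j\in N^*$ and $P_j=\{1,\dots,l_j\}$ (indices with $d_{pj}>\check\alpha_j$) for $j\in N\setminus N^*$; $P=P_1\times\dots\times P_n$. For $p\in P$, $i\in N$, $j\in N\setminus N^*$: $\gamma_{ij}=1$ if $d_{p_jj}\le a_{ij}$ and $\gamma_{ij}=0$ if $a_{ij}\le d_{(p_j-1)j}$. *)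

theory Defs
  imports Complex_Main
begin

text \<open>Index set N is the finite type 'n (so n = CARD('n) \<ge> 1).
  Matrices are functions 'n \<Rightarrow> 'n \<Rightarrow> real, vectors 'n \<Rightarrow> real.\<close>

definition maxmin_prod :: "('n::finite \<Rightarrow> 'n \<Rightarrow> real) \<Rightarrow> ('n \<Rightarrow> real) \<Rightarrow> 'n \<Rightarrow> real" where
  "maxmin_prod A x i = (\<Sum>j\<in>UNIV. min (A i j) (x j))"

definition unit_box :: "('n \<Rightarrow> real) set" where
  "unit_box = {x. \<forall>j. 0 \<le> x j \<and> x j \<le> 1}"

definition V_star :: "('n::finite \<Rightarrow> 'n \<Rightarrow> real) \<Rightarrow> ('n \<Rightarrow> real) \<Rightarrow> real \<Rightarrow> ('n \<Rightarrow> real) set" where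
  "V_star A b lam = {x \<in> unit_box.
     (\<forall>i. maxmin_prod A x i \<ge> b i \<and> maxmin_prod A x i = lam * x i) \<and> x \<noteq> (\<lambda>_. 0)}"

definition alpha_check :: "('n::finite \<Rightarrow> 'n \<Rightarrow> real) \<Rightarrow> ('n \<Rightarrow> real) \<Rightarrow> 'n \<Rightarrow> real" where
  "alpha_check A b j = Max ({0} \<union> {b i - (\<Sum>k\<in>UNIV - {j}. A i k) | i. True})"

definition Dset :: "('n::finite \<Rightarrow> 'n \<Rightarrow> real) \<Rightarrow> ('n \<Rightarrow> real) \<Rightarrow> 'n \<Rightarrow> real set" where
  "Dset A b j = {alpha_check A b j} \<union> {A i j | i. A i j \<ge> alpha_check A b j} \<union> {1}"

text \<open>d_{p j}: the p-th element (0-based) of D_j listed increasingly; l_j = |D_j| - 1.\<close>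
definition dval :: "('n::finite \<Rightarrow> 'n \<Rightarrow> real) \<Rightarrow> ('n \<Rightarrow> real) \<Rightarrow> nat \<Rightarrow> 'n \<Rightarrow> real" where
  "dval A b p j = sorted_list_of_set (Dset A b j) ! p"

definition lval :: "('n::finite \<Rightarrow> 'n \<Rightarrow> real) \<Rightarrow> ('n \<Rightarrow> real) \<Rightarrow> 'n \<Rightarrow> nat" where
  "lval A b j = card (Dset A b j) - 1"

definition Nstar :: "('n::finite \<Rightarrow> 'n \<Rightarrow> real) \<Rightarrow> ('n \<Rightarrow> real) \<Rightarrow> 'n set" where
  "Nstar A b = {j. alpha_check A b j = 1}"

definition Pj :: "('n::finite \<Rightarrow> 'n \<Rightarrow> real) \<Rightarrow> ('n \<Rightarrow> real) \<Rightarrow> 'n \<Rightarrow> nat set" where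
  "Pj A b j = (if j \<in> Nstar A b then {0} else {1..lval A b j})"

definition Pset :: "('n::finite \<Rightarrow> 'n \<Rightarrow> real) \<Rightarrow> ('n \<Rightarrow> real) \<Rightarrow> ('n \<Rightarrow> nat) set" where
  "Pset A b = {p. \<forall>j. p j \<in> Pj A b j}"

text \<open>gamma_{ij} = 1 if d_{p_j j} \<le> a_ij, and 0 otherwise (then a_ij \<le> d_{(p_j-1) j}).\<close>
definition gamma :: "('n::finite \<Rightarrow> 'n \<Rightarrow> real) \<Rightarrow> ('n \<Rightarrow> real) \<Rightarrow> ('n \<Rightarrow> nat) \<Rightarrow> 'n \<Rightarrow> 'n \<Rightarrow> real" where
  "gamma A b p i j = (if dval A b (p j) j \<le> A i j then 1 else 0)"

definition sys_lhs :: "('n::finite \<Rightarrow> 'n \<Rightarrow> real) \<Rightarrow> ('n \<Rightarrow> real) \<Rightarrow> ('n \<Rightarrow> nat) \<Rightarrow> ('n \<Rightarrow> real) \<Rightarrow> 'n \<Rightarrow> real" where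
  "sys_lhs A b p x i = (\<Sum>j\<in>Nstar A b. A i j)
     + (\<Sum>j\<in>UNIV - Nstar A b. gamma A b p i j * x j + (1 - gamma A b p i j) * A i j)"

definition system_p :: "('n::finite \<Rightarrow> 'n \<Rightarrow> real) \<Rightarrow> ('n \<Rightarrow> real) \<Rightarrow> real \<Rightarrow> ('n \<Rightarrow> nat) \<Rightarrow> ('n \<Rightarrow> real) \<Rightarrow> bool" where
  "system_p A b lam p x \<longleftrightarrow>
     (\<forall>j\<in>Nstar A b. x j = dval A b 0 j \<and> x j = 1) \<and>
     (\<forall>j\<in>UNIV - Nstar A b. dval A b (p j - 1) j \<le> x j \<and> x j \<le> dval A b (p j) j) \<and>
     (\<forall>i. sys_lhs A b p x i \<ge> b i) \<and>
     (\<forall>i. sys_lhs A b p x i = lam * x i)"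

end

theory Submission
  imports Defs
begin

text \<open>If x \<in> V*(A, \<lambda>), then b_i \<le> (A \<odot> x)_i \<le> x_j + \<Sum>_(k \<noteq> j) a_ik forces x_j \<ge> \<alpha>_j for
  every j. Hence x_j = 1 on N*, and for j \<notin> N* the value x_j lies in a gap
  [d_(p_j - 1, j), d_(p_j, j)] between consecutive elements of D_j. No a_ij \<ge> \<alpha>_j lies strictly
  inside such a gap, so min(a_ij, x_j) is x_j if a_ij \<ge> d_(p_j, j) and a_ij otherwise: the max-min
  product equals the left-hand side of the linear system for p, and x solves that system.\<close>

lemma sorted_list_of_set_nth_0:
  assumes "finite S" "S \<noteq> {}"
  shows "sorted_list_of_set S ! 0 = Min S"
  using assms by (simp add: sorted_list_of_set_nonempty)

lemma sorted_list_of_set_nth_mono: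
  assumes "finite S" "q \<le> r" "r < card S"
  shows "sorted_list_of_set S ! q \<le> sorted_list_of_set S ! r"
  using assms by (intro sorted_nth_mono) auto

lemma sorted_list_of_set_nth_last:
  assumes "finite S" "S \<noteq> {}"
  shows "sorted_list_of_set S ! (card S - 1) = Max S"
proof -
  let ?L = "sorted_list_of_set S"
  have "card S > 0" using assms by (simp add: card_gt_0_iff)
  then have "?L ! (card S - 1) \<in> S"
    using assms(1) by (metis diff_less less_one nth_mem length_sorted_list_of_set set_sorted_list_of_set)
  then have le_Max: "?L ! (card S - 1) \<le> Max S" using assms(1) by simp
  obtain k where "k < card S" "?L ! k = Max S"
    using assms by (metis Max_in in_set_conv_nth length_sorted_list_of_set set_sorted_list_of_set)
  then have "Max S \<le> ?L ! (card S - 1)"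
    using sorted_list_of_set_nth_mono[OF assms(1), of k "card S - 1"] by simp
  with le_Max show ?thesis by simp
qed

lemma le_sorted_list_of_set_nth_pred:
  assumes "finite S" "y \<in> S" "y < sorted_list_of_set S ! q" "q < card S"
  shows "y \<le> sorted_list_of_set S ! (q - 1)"
proof -
  let ?L = "sorted_list_of_set S"
  obtain k where k: "k < card S" "?L ! k = y"
    using assms(1,2) by (metis in_set_conv_nth length_sorted_list_of_set set_sorted_list_of_set)
  have "k < q"
  proof (rule ccontr)
    assume "\<not> k < q"
    then have "?L ! q \<le> y" using sorted_list_of_set_nth_mono[OF assms(1), of q k] k by simp
    with assms(3) show False by simp
  qed
  then show ?thesis using sorted_list_of_set_nth_mono[OF assms(1), of k "q - 1"] k assms(4) by simp
qed

lemma ex_bracketing_index: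
  fixes f :: "nat \<Rightarrow> 'a::linorder"
  assumes "f 0 \<le> y" "y \<le> f m" "1 \<le> m"
  shows "\<exists>q. 1 \<le> q \<and> q \<le> m \<and> f (q - 1) \<le> y \<and> y \<le> f q"
  using assms(3,2)
proof (induction m rule: dec_induct)
  case base
  then show ?case using assms(1) by auto
next
  case (step m)
  show ?case
  proof (cases "y \<le> f m")
    case True
    with step.IH show ?thesis by (meson le_Suc_eq)
  next
    case False
    with step.prems show ?thesis by (intro exI[of _ "Suc m"]) auto
  qed
qed

lemma alpha_check_le_if_maxmin_prod_ge:
  fixes A :: "'n::finite \<Rightarrow> 'n \<Rightarrow> real"
  assumes "x \<in> unit_box" "\<forall>i. b i \<le> maxmin_prod A x i"
  shows "alpha_check A b j \<le> x j"
proof -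
  have "b i - (\<Sum>k\<in>UNIV - {j}. A i k) \<le> x j" for i
  proof -
    have "maxmin_prod A x i = min (A i j) (x j) + (\<Sum>k\<in>UNIV - {j}. min (A i k) (x k))"
      unfolding maxmin_prod_def by (simp add: sum.remove)
    also have "\<dots> \<le> x j + (\<Sum>k\<in>UNIV - {j}. A i k)"
      by (intro add_mono sum_mono) auto
    finally show ?thesis using assms(2)[rule_format, of i] by linarith
  qed
  moreover have "0 \<le> x j" using assms(1) by (simp add: unit_box_def)
  ultimately show ?thesis
    unfolding alpha_check_def by (subst Max_le_iff) (auto simp: full_SetCompr_eq)
qed

lemma finite_Dset: "finite (Dset A b j)"
proof -
  have "{A i j | i. alpha_check A b j \<le> A i j} \<subseteq> range (\<lambda>i. A i j)" by auto
  then show ?thesis unfolding Dset_def by (simp add: finite_subset)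
qed

lemma Dset_nonempty: "Dset A b j \<noteq> {}"
  unfolding Dset_def by simp

lemma Dset_bounds:
  assumes "\<forall>i. A i j \<le> 1" "alpha_check A b j \<le> 1" "y \<in> Dset A b j"
  shows "alpha_check A b j \<le> y" "y \<le> 1"
  using assms unfolding Dset_def by auto

lemma card_Dset_eq: "card (Dset A b j) = lval A b j + 1"
proof -
  have "card (Dset A b j) > 0"
    using finite_Dset[of A b j] Dset_nonempty[of A b j] by (simp add: card_gt_0_iff)
  then show ?thesis unfolding lval_def by simp
qed

lemma dval_0:
  assumes "\<forall>i. A i j \<le> 1" "alpha_check A b j \<le> 1"
  shows "dval A b 0 j = alpha_check A b j"
proof -
  have "Min (Dset A b j) = alpha_check A b j"
    using Dset_bounds[OF assms] finite_Dset by (intro Min_eqI) (auto simp: Dset_def)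
  then show ?thesis
    unfolding dval_def by (simp add: sorted_list_of_set_nth_0[OF finite_Dset Dset_nonempty])
qed

lemma dval_lval:
  assumes "\<forall>i. A i j \<le> 1" "alpha_check A b j \<le> 1"
  shows "dval A b (lval A b j) j = 1"
proof -
  have "Max (Dset A b j) = 1"
    using Dset_bounds[OF assms] finite_Dset by (intro Max_eqI) (auto simp: Dset_def)
  then show ?thesis
    using sorted_list_of_set_nth_last[OF finite_Dset Dset_nonempty, of A b j]
    unfolding dval_def card_Dset_eq by simp
qed

lemma one_le_lval:
  assumes "\<forall>i. A i j \<le> 1" "alpha_check A b j \<le> 1" "j \<notin> Nstar A b"
  shows "1 \<le> lval A b j"
proof (rule ccontr)
  assume "\<not> 1 \<le> lval A b j"
  then have "lval A b j = 0" by simp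
  then have "alpha_check A b j = 1" using dval_0[OF assms(1,2)] dval_lval[OF assms(1,2)] by simp
  with assms(3) show False unfolding Nstar_def by simp
qed

lemma ex_Pset_bracketing:
  fixes A :: "'n::finite \<Rightarrow> 'n \<Rightarrow> real"
  assumes "\<forall>i j. A i j \<le> 1" "\<forall>j. alpha_check A b j \<le> 1"
    and "\<forall>j. alpha_check A b j \<le> x j \<and> x j \<le> 1"
  obtains p where "p \<in> Pset A b"
    "\<forall>j\<in>UNIV - Nstar A b. dval A b (p j - 1) j \<le> x j \<and> x j \<le> dval A b (p j) j"
proof -
  have "\<exists>q. 1 \<le> q \<and> q \<le> lval A b j \<and> dval A b (q - 1) j \<le> x j \<and> x j \<le> dval A b q j"
    if "j \<notin> Nstar A b" for j
    using ex_bracketing_index[of "\<lambda>q. dval A b q j" "x j" "lval A b j"]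
      dval_0[of A j b] dval_lval[of A j b] one_le_lval[of A j b] assms that by auto
  then obtain q where q: "\<And>j. j \<notin> Nstar A b \<Longrightarrow>
      1 \<le> q j \<and> q j \<le> lval A b j \<and> dval A b (q j - 1) j \<le> x j \<and> x j \<le> dval A b (q j) j"
    by metis
  let ?p = "\<lambda>j. if j \<in> Nstar A b then 0 else q j"
  have "?p \<in> Pset A b" using q by (auto simp: Pset_def Pj_def)
  moreover have "\<forall>j\<in>UNIV - Nstar A b. dval A b (?p j - 1) j \<le> x j \<and> x j \<le> dval A b (?p j) j"
    using q by simp
  ultimately show ?thesis by (rule that)
qed

lemma gamma_term_eq_min:
  assumes "alpha_check A b j \<le> x j" "p j \<le> lval A b j"
    and "dval A b (p j - 1) j \<le> x j" "x j \<le> dval A b (p j) j"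
  shows "gamma A b p i j * x j + (1 - gamma A b p i j) * A i j = min (A i j) (x j)"
proof (cases "dval A b (p j) j \<le> A i j")
  case True
  then show ?thesis using assms(4) unfolding gamma_def by simp
next
  case below: False
  have "A i j \<le> x j"
  proof (cases "alpha_check A b j \<le> A i j")
    case True
    then have in_D: "A i j \<in> Dset A b j" unfolding Dset_def by auto
    have "A i j \<le> dval A b (p j - 1) j"
      using le_sorted_list_of_set_nth_pred[OF finite_Dset in_D] below assms(2)
      unfolding dval_def card_Dset_eq by simp
    with assms(3) show ?thesis by simp
  next
    case False
    with assms(1) show ?thesis by simp
  qed
  with below show ?thesis unfolding gamma_def by simp
qed

lemma sys_lhs_eq_maxmin_prod:
  fixes A :: "'n::finite \<Rightarrow> 'n \<Rightarrow> real"
  assumes "\<forall>i j. A i j \<le> 1" "p \<in> Pset A b"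
    and "\<forall>j. alpha_check A b j \<le> x j" "\<forall>j\<in>Nstar A b. x j = 1"
    and "\<forall>j\<in>UNIV - Nstar A b. dval A b (p j - 1) j \<le> x j \<and> x j \<le> dval A b (p j) j"
  shows "sys_lhs A b p x i = maxmin_prod A x i"
proof -
  have "maxmin_prod A x i =
      (\<Sum>j\<in>Nstar A b. min (A i j) (x j)) + (\<Sum>j\<in>UNIV - Nstar A b. min (A i j) (x j))"
    unfolding maxmin_prod_def by (simp add: sum.subset_diff[of "Nstar A b" UNIV])
  also have "(\<Sum>j\<in>Nstar A b. min (A i j) (x j)) = (\<Sum>j\<in>Nstar A b. A i j)"
    using assms(1,4) by (intro sum.cong) auto
  also have "(\<Sum>j\<in>UNIV - Nstar A b. min (A i j) (x j)) =
      (\<Sum>j\<in>UNIV - Nstar A b. gamma A b p i j * x j + (1 - gamma A b p i j) * A i j)"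
  proof (rule sum.cong)
    fix j assume j: "j \<in> UNIV - Nstar A b"
    have "p j \<in> Pj A b j" using assms(2) by (simp add: Pset_def)
    with j have "p j \<le> lval A b j" by (simp add: Pj_def)
    with j assms(3,5) show "min (A i j) (x j) = gamma A b p i j * x j + (1 - gamma A b p i j) * A i j"
      by (simp add: gamma_term_eq_min)
  qed simp
  finally show ?thesis unfolding sys_lhs_def by simp
qed

theorem theorem4p2:
  fixes A :: "'n::finite \<Rightarrow> 'n \<Rightarrow> real" and b :: "'n \<Rightarrow> real" and lam :: real
  assumes "\<forall>i j. 0 \<le> A i j \<and> A i j \<le> 1"
    and "\<forall>i. b i > 0"
    and "\<forall>j. alpha_check A b j \<le> 1"
    and "lam \<ge> 0"
    and "\<forall>p\<in>Pset A b. \<not> (\<exists>x\<in>unit_box. system_p A b lam p x)"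
  shows "V_star A b lam = {}"
proof (rule ccontr)
  assume "V_star A b lam \<noteq> {}"
  then obtain x where x: "x \<in> unit_box" "\<forall>i. b i \<le> maxmin_prod A x i"
    "\<forall>i. maxmin_prod A x i = lam * x i"
    unfolding V_star_def by blast
  have A_le_1: "\<forall>i j. A i j \<le> 1" using assms(1) by blast
  have x_bounds: "\<forall>j. alpha_check A b j \<le> x j \<and> x j \<le> 1"
    using alpha_check_le_if_maxmin_prod_ge[OF x(1,2)] x(1) by (simp add: unit_box_def)
  have x_Nstar: "x j = 1 \<and> dval A b 0 j = 1" if "j \<in> Nstar A b" for j
  proof -
    have "alpha_check A b j = 1" using that unfolding Nstar_def by simp
    then show ?thesis using x_bounds[rule_format, of j] dval_0[of A j b] A_le_1 by simp
  qed
  obtain p where p: "p \<in> Pset A b"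
    "\<forall>j\<in>UNIV - Nstar A b. dval A b (p j - 1) j \<le> x j \<and> x j \<le> dval A b (p j) j"
    using ex_Pset_bracketing[OF A_le_1 assms(3) x_bounds] by blast
  have "sys_lhs A b p x i = maxmin_prod A x i" for i
    using sys_lhs_eq_maxmin_prod[OF A_le_1 p(1) _ _ p(2)] x_bounds x_Nstar by simp
  then have "system_p A b lam p x"
    using x p(2) x_Nstar unfolding system_p_def by auto
  with assms(5) p(1) x(1) show False by blast
qed

end
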